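(* Let $\mathbf H$ be a symmetric positive semidefinite $d\times d$ matrix partitioned into diagonal blocks $\mathbf H_{11},\dots,\mathbf H_{LL}$, let $\mathbf B=\mathrm{blkdiag}(\mathbf H_{11},\dots,\mathbf H_{LL})$ and $\mathbf E=\mathbf H-\mathbf B$, and assume $T=\mathrm{Tr}(\mathbf H)>0$ (note $\mathrm{Tr}(\mathbf B)=T$). Let $\alpha>1$ and $\Lambda_*=\max\{\lambda_{\max}(\mathbf H),\lambda_{\max}(\mathbf B)\}$. Then $$\big|\widetilde{\mathcal R}_\alpha(\mathbf H)-\widetilde{\mathcal R}_\alpha(\mathbf B)\big|\le\alpha\Big(\frac{\Lambda_*}{T}\Big)^{\alpha-1}\frac{\sqrt d\,\|\mathbf E\|_F}{T}.$$
   Context: For a symmetric positive semidefinite matrix $\mathbf M$ with eigenvalues $\lambda_1,\dots,\lambda_m\ge0$ and $\mathrm{Tr}(\mathbf M)>0$, $\widetilde{\mathcal R}_\alpha(\mathbf M)=\sum_{i=1}^m(\lambda_i/\mathrm{Tr}(\mathbf M))^\alpha$ (with $0^\alpha=0$). $\|\cdot\|_F$ is the Frobenius norm. *)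

theory Defs
  imports "Jordan_Normal_Form.Matrix" "Jordan_Normal_Form.Char_Poly"
begin

definition mtrace :: "real mat \<Rightarrow> real" where
  "mtrace M = (\<Sum>i<dim_row M. M $$ (i, i))"

definition frob_norm :: "real mat \<Rightarrow> real" where
  "frob_norm M = sqrt (\<Sum>i<dim_row M. \<Sum>j<dim_col M. (M $$ (i, j))^2)"

definition sym_psd :: "nat \<Rightarrow> real mat \<Rightarrow> bool" where
  "sym_psd d M \<longleftrightarrow> M \<in> carrier_mat d d \<and> transpose_mat M = M \<and>
     (\<forall>v \<in> carrier_vec d. v \<bullet> (M *\<^sub>v v) \<ge> 0)"

definition eig_mult :: "real mat \<Rightarrow> real \<Rightarrow> nat" where
  "eig_mult M x = order x (char_poly M)"

text \<open>Normalised Renyi quantity: sum over the eigenvalues, counted with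
  multiplicity, of (lambda / Tr M) to the power alpha (with 0 powr alpha = 0).\<close>
definition renyi_tilde :: "real \<Rightarrow> real mat \<Rightarrow> real" where
  "renyi_tilde \<alpha> M =
     (\<Sum>x\<in>{x. eigenvalue M x}. real (eig_mult M x) * (x / mtrace M) powr \<alpha>)"

definition lambda_max :: "real mat \<Rightarrow> real" where
  "lambda_max M = Max {x. eigenvalue M x}"

text \<open>Block-diagonal part of M w.r.t. a block labelling blk of the indices.\<close>
definition blkdiag_part :: "(nat \<Rightarrow> nat) \<Rightarrow> real mat \<Rightarrow> real mat" where
  "blkdiag_part blk M =
     mat (dim_row M) (dim_col M) (\<lambda>(i, j). if blk i = blk j then M $$ (i, j) else 0)"

end

(*
  Diagonalise H = U diag(lambda) U^T and B = V diag(mu) V^T with orthonormal U and V, so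
  that renyi_tilde alpha H = sum_i F(lambda_i) and renyi_tilde alpha B = sum_j F(mu_j) for the
  convex function F x = (x / T)^alpha.  The squared overlaps p_ij = <u_i, v_j>^2 form a doubly
  stochastic matrix, and the j-th diagonal entry of V^T E V is sum_i p_ij lambda_i - mu_j.
  Averaging the tangent inequality F(lambda_i) - F(mu_j) >= F'(mu_j) (lambda_i - mu_j) with
  the weights p_ij therefore gives

    sum_i F(lambda_i) - sum_j F(mu_j) >= sum_j F'(mu_j) (V^T E V)_jj
                                      >= - F'(Lambda) sum_j |(V^T E V)_jj|,

  and Cauchy-Schwarz with the orthogonal invariance of the Frobenius norm bounds the last
  sum by sqrt d ||E||_F.  Exchanging the roles of H and B gives the other inequality.
  B has the diagonal of H.
*)
theory Submission
  imports Defs "Jordan_Normal_Form.Spectral_Radius"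
begin

section \<open>Real symmetric matrices have real eigenvalues\<close>

lemma of_real_mat_mult_conjugate:
  fixes A :: "real mat" and z :: "complex vec"
  assumes "A \<in> carrier_mat n n" "z \<in> carrier_vec n"
  shows "map_mat complex_of_real A *\<^sub>v conjugate z = conjugate (map_mat complex_of_real A *\<^sub>v z)"
  using assms by (intro eq_vecI) (auto simp: scalar_prod_def sum_conjugate)

lemma eigenvalue_of_real_symmetric_is_real:
  fixes A :: "real mat"
  assumes A: "A \<in> carrier_mat n n" and sym: "transpose_mat A = A"
    and c: "eigenvalue (map_mat complex_of_real A) c"
  shows "c \<in> \<real>"
proof -
  let ?A = "map_mat complex_of_real A"
  have A': "?A \<in> carrier_mat n n" using A by simp
  obtain z where z: "z \<in> carrier_vec n" "z \<noteq> 0\<^sub>v n" and Az: "?A *\<^sub>v z = c \<cdot>\<^sub>v z"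
    using c A' unfolding eigenvalue_def eigenvector_def by auto
  have sym': "transpose_mat ?A = ?A"
    using sym by (metis map_mat_transpose)
  have "c * (z \<bullet>c z) = (?A *\<^sub>v z) \<bullet>c z"
    using z by (simp add: Az)
  also have "\<dots> = (transpose_mat ?A *\<^sub>v z) \<bullet> conjugate z"
    by (simp add: sym')
  also have "\<dots> = z \<bullet>c (?A *\<^sub>v z)"
    using A z by (simp add: transpose_vec_mult_scalar[OF A'] of_real_mat_mult_conjugate)
  also have "\<dots> = conjugate c * (z \<bullet>c z)"
    using z by (simp add: Az conjugate_smult_vec)
  finally have "c * (z \<bullet>c z) = conjugate c * (z \<bullet>c z)" .
  moreover have "z \<bullet>c z \<noteq> 0" using z by (metis conjugate_square_greater_0_vec less_irrefl)
  ultimately have "conjugate c = c" by simp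
  thus ?thesis by (metis Reals_cnj_iff conjugate_complex_def)
qed

lemma real_symmetric_has_eigenvalue:
  fixes A :: "real mat"
  assumes A: "A \<in> carrier_mat n n" and sym: "transpose_mat A = A" and n: "n > 0"
  obtains e where "eigenvalue A e"
proof -
  let ?A = "map_mat complex_of_real A"
  obtain c where c: "eigenvalue ?A c"
    using spectrum_non_empty[of ?A n] A n unfolding spectrum_def by auto
  then obtain e where ce: "c = complex_of_real e"
    using eigenvalue_of_real_symmetric_is_real[OF A sym] by (metis Reals_cases)
  have "poly (map_poly complex_of_real (char_poly A)) c = 0"
    using c A by (simp add: eigenvalue_root_char_poly of_real_hom.char_poly_hom[OF A, symmetric])
  hence "poly (char_poly A) e = 0"
    by (simp add: ce of_real_hom.poly_map_poly)
  thus ?thesis using that eigenvalue_root_char_poly[OF A] by blast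
qed

definition orthonormal_mat :: "nat \<Rightarrow> real mat \<Rightarrow> bool" where
  "orthonormal_mat n U \<longleftrightarrow> U \<in> carrier_mat n n \<and> transpose_mat U * U = 1\<^sub>m n"

lemma orthonormal_matD:
  assumes "orthonormal_mat n U"
  shows "U \<in> carrier_mat n n" "transpose_mat U * U = 1\<^sub>m n" "U * transpose_mat U = 1\<^sub>m n"
  using assms mat_mult_left_right_inverse[of "transpose_mat U" n U]
  unfolding orthonormal_mat_def by auto

lemma orthonormal_mat_col_inner:
  assumes "orthonormal_mat n U" "i < n" "j < n"
  shows "col U i \<bullet> col U j = (if i = j then 1 else 0)"
proof -
  have "(transpose_mat U * U) $$ (i, j) = col U i \<bullet> col U j"
    using orthonormal_matD(1)[OF assms(1)] assms(2,3) by simp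
  thus ?thesis using orthonormal_matD(2)[OF assms(1)] assms(2,3) by simp
qed

lemma orthonormal_mat_mult:
  assumes U: "orthonormal_mat n U" and W: "orthonormal_mat n W"
  shows "orthonormal_mat n (U * W)"
proof -
  note U' = orthonormal_matD[OF U] and W' = orthonormal_matD[OF W]
  have "transpose_mat (U * W) * (U * W) = transpose_mat W * (transpose_mat U * U) * W"
    using U'(1) W'(1) by (simp add: transpose_mult[of _ n n] assoc_mult_mat[of _ n n _ n _ n])
  also have "\<dots> = 1\<^sub>m n" using U'(2) W'(1,2) by simp
  finally show ?thesis using U'(1) W'(1) unfolding orthonormal_mat_def by simp
qed

lemma orthonormal_mat_one_block:
  assumes U: "orthonormal_mat m U"
  shows "orthonormal_mat (Suc m) (four_block_mat (1\<^sub>m 1) (0\<^sub>m 1 m) (0\<^sub>m m 1) U)"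
proof -
  note U' = orthonormal_matD[OF U]
  let ?F = "four_block_mat (1\<^sub>m 1) (0\<^sub>m 1 m) (0\<^sub>m m 1) U"
  have "transpose_mat ?F = four_block_mat (1\<^sub>m 1) (0\<^sub>m 1 m) (0\<^sub>m m 1) (transpose_mat U)"
    using U'(1) by (subst transpose_four_block_mat) auto
  hence "transpose_mat ?F * ?F = 1\<^sub>m (Suc m)"
    using U'(1,2) by (simp add: mult_four_block_mat[of _ 1 1 _ m _ m _ _ 1 _ m])
  moreover have "?F \<in> carrier_mat (Suc m) (Suc m)"
    using four_block_carrier_mat[of "1\<^sub>m 1" 1 1 U m m] U'(1) by simp
  ultimately show ?thesis unfolding orthonormal_mat_def by simp
qed

lemma orthonormal_mat_transpose_isometry:
  assumes U: "orthonormal_mat n U" and x: "x \<in> carrier_vec n"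
  shows "(transpose_mat U *\<^sub>v x) \<bullet> (transpose_mat U *\<^sub>v x) = x \<bullet> x"
proof -
  note U' = orthonormal_matD[OF U]
  have "(transpose_mat U *\<^sub>v x) \<bullet> (transpose_mat U *\<^sub>v x) = x \<bullet> (U *\<^sub>v (transpose_mat U *\<^sub>v x))"
    using U'(1) x by (intro transpose_vec_mult_scalar) auto
  also have "U *\<^sub>v (transpose_mat U *\<^sub>v x) = x"
    using U'(1,3) x by (simp flip: assoc_mult_mat_vec)
  finally show ?thesis .
qed

lemma orthonormal_mat_parseval:
  assumes U: "orthonormal_mat n U" and x: "x \<in> carrier_vec n"
  shows "(\<Sum>i<n. (col U i \<bullet> x)\<^sup>2) = x \<bullet> x"
proof -
  have "(\<Sum>i<n. (col U i \<bullet> x)\<^sup>2) = (transpose_mat U *\<^sub>v x) \<bullet> (transpose_mat U *\<^sub>v x)"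
    using orthonormal_matD(1)[OF U]
    by (simp add: scalar_prod_def power2_eq_square atLeast0LessThan)
  thus ?thesis using orthonormal_mat_transpose_isometry[OF assms] by simp
qed

lemma orthonormal_overlap_col_sum:
  assumes U: "orthonormal_mat n U" and V: "orthonormal_mat n V" and j: "j < n"
  shows "(\<Sum>i<n. (col U i \<bullet> col V j)\<^sup>2) = 1"
  using orthonormal_mat_parseval[OF U, of "col V j"] orthonormal_mat_col_inner[OF V j j]
    orthonormal_matD(1)[OF V] j by simp

lemma orthonormal_overlap_row_sum:
  assumes U: "orthonormal_mat n U" and V: "orthonormal_mat n V" and i: "i < n"
  shows "(\<Sum>j<n. (col U i \<bullet> col V j)\<^sup>2) = 1"
proof -
  have "(\<Sum>j<n. (col U i \<bullet> col V j)\<^sup>2) = (\<Sum>j<n. (col V j \<bullet> col U i)\<^sup>2)"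
    using orthonormal_matD(1)[OF U] orthonormal_matD(1)[OF V] i
    by (intro sum.cong refl) (metis carrier_matD col_dim comm_scalar_prod)
  thus ?thesis using orthonormal_overlap_col_sum[OF V U i] by simp
qed

lemma unit_eigenvector_exists:
  fixes A :: "real mat"
  assumes A: "A \<in> carrier_mat n n" and e: "eigenvalue A e"
  obtains v where "v \<in> carrier_vec n" "v \<bullet> v = 1" "A *\<^sub>v v = e \<cdot>\<^sub>v v"
proof -
  obtain w where w: "w \<in> carrier_vec n" "w \<noteq> 0\<^sub>v n" and Aw: "A *\<^sub>v w = e \<cdot>\<^sub>v w"
    using e A unfolding eigenvalue_def eigenvector_def by auto
  have ww: "w \<bullet> w > 0"
    using conjugate_square_greater_0_vec[OF w(1)] w by simp
  define v where "v = (1 / sqrt (w \<bullet> w)) \<cdot>\<^sub>v w"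
  have "v \<in> carrier_vec n" "v \<bullet> v = 1" "A *\<^sub>v v = e \<cdot>\<^sub>v v"
    unfolding v_def using w ww A Aw
    by (auto simp: mult_mat_vec smult_smult_assoc mult.commute real_sqrt_mult[symmetric])
  thus ?thesis using that by blast
qed

lemma unit_vec_extends_to_orthonormal_mat:
  fixes v :: "real vec"
  assumes v: "v \<in> carrier_vec n" and v1: "v \<bullet> v = 1"
  obtains W where "orthonormal_mat n W" "col W 0 = v"
proof -
  interpret cof_vec_space n "TYPE(real)" .
  have v0: "v \<noteq> 0\<^sub>v n" using v1 v by auto
  define b where "b = basis_completion v"
  from basis_completion[OF v v0, folded b_def]
  have b: "distinct b" "\<not> lin_dep (set b)" "set b \<subseteq> carrier_vec n" "hd b = v" "length b = n"
    by auto
  have n: "n > 0" using v0 v by (cases n) auto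
  from b n obtain vs where bv: "b = v # vs" by (cases b) auto
  define ws where "ws = gram_schmidt n b"
  from gram_schmidt_result[OF b(3,1,2) refl, folded ws_def]
  have ws: "set ws \<subseteq> carrier_vec n" "corthogonal ws" "length ws = n"
    by (auto simp: b(5))
  have hd_ws: "hd ws = v"
    using gram_schmidt_hd[OF v, of vs] unfolding ws_def bv .
  have ws_i: "ws ! i \<in> carrier_vec n" if "i < n" for i using ws that by auto
  have ws_orth: "ws ! i \<bullet> ws ! j = 0" if "i < n" "j < n" "i \<noteq> j" for i j
    using corthogonalD[OF ws(2), of i j] ws(3) that by simp
  have ws_pos: "ws ! i \<bullet> ws ! i > 0" if "i < n" for i
    using corthogonalD[OF ws(2), of i i] ws(3) that ws_i[OF that]
      conjugate_square_greater_0_vec[of "ws ! i" n] by auto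
  define us where "us = map (\<lambda>w. (1 / sqrt (w \<bullet> w)) \<cdot>\<^sub>v w) ws"
  have us_i: "us ! i = (1 / sqrt (ws ! i \<bullet> ws ! i)) \<cdot>\<^sub>v ws ! i" if "i < n" for i
    using that ws(3) unfolding us_def by simp
  define W where "W = mat_of_cols n us"
  have W: "W \<in> carrier_mat n n"
    unfolding W_def using mat_of_cols_carrier(1)[of n us] ws(3) by (simp add: us_def)
  have col_W: "col W i = us ! i" if "i < n" for i
    unfolding W_def using that ws ws_i by (intro col_mat_of_cols) (auto simp: us_def)
  have "transpose_mat W * W = 1\<^sub>m n"
  proof (rule eq_matI)
    fix i j assume "i < dim_row (1\<^sub>m n)" "j < dim_col (1\<^sub>m n)"
    hence ij: "i < n" "j < n" by auto
    have "(transpose_mat W * W) $$ (i, j)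
        = (1 / sqrt (ws!i \<bullet> ws!i)) * (1 / sqrt (ws!j \<bullet> ws!j)) * (ws ! i \<bullet> ws ! j)"
      using ij W ws_i[OF ij(1)] ws_i[OF ij(2)] by (simp add: col_W us_i)
    also have "\<dots> = 1\<^sub>m n $$ (i, j)"
      using ij ws_orth[OF ij] ws_pos[OF ij(1)] by (auto simp: real_sqrt_mult[symmetric])
    finally show "(transpose_mat W * W) $$ (i, j) = 1\<^sub>m n $$ (i, j)" .
  qed (use W in auto)
  moreover have "col W 0 = v"
    using col_W[OF n] hd_ws ws(3) n v1 unfolding us_def by (cases ws) auto
  ultimately show ?thesis using that W unfolding orthonormal_mat_def by blast
qed

section \<open>The spectral theorem\<close>

definition mat_diag :: "nat \<Rightarrow> (nat \<Rightarrow> 'a :: zero) \<Rightarrow> 'a mat" where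
  "mat_diag n f = mat n n (\<lambda>(i, j). if i = j then f i else 0)"

lemma mat_diag_carrier [simp]: "mat_diag n f \<in> carrier_mat n n"
  unfolding mat_diag_def by simp

lemma mat_diag_quadratic_form:
  fixes q :: "'a :: comm_ring_1 vec"
  assumes q: "q \<in> carrier_vec n"
  shows "q \<bullet> (mat_diag n g *\<^sub>v q) = (\<Sum>i<n. g i * (q $ i)\<^sup>2)"
proof -
  have "(mat_diag n g *\<^sub>v q) $ i = g i * q $ i" if i: "i < n" for i
  proof -
    have "(mat_diag n g *\<^sub>v q) $ i = (\<Sum>k\<in>{0..<n}. (if i = k then g i else 0) * q $ k)"
      using i q by (simp add: mat_diag_def scalar_prod_def)
    also have "\<dots> = (\<Sum>k\<in>{0..<n}. if k = i then g i * q $ k else 0)"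
      by (intro sum.cong) auto
    finally show ?thesis using i by simp
  qed
  thus ?thesis using q unfolding scalar_prod_def
    by (simp del: index_mult_mat_vec
        add: carrier_matD[OF mat_diag_carrier] power2_eq_square atLeast0LessThan mult.left_commute)
qed

lemma transpose_mult_mult_index:
  fixes X W :: "'a :: comm_ring_1 mat"
  assumes X: "X \<in> carrier_mat n n" and W: "W \<in> carrier_mat n m" and ij: "i < m" "j < m"
  shows "(transpose_mat W * X * W) $$ (i, j) = col W i \<bullet> (X *\<^sub>v col W j)"
proof -
  have "transpose_mat W * X * W = transpose_mat W * (X * W)"
    using X W by (simp add: assoc_mult_mat[of _ m n _ n _ m])
  thus ?thesis using X W ij by (simp add: col_mult2 del: col_mult)
qed

lemma symmetric_transpose_mult_mult:
  fixes A W :: "'a :: comm_ring_1 mat"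
  assumes A: "A \<in> carrier_mat n n" and W: "W \<in> carrier_mat n m" and sym: "transpose_mat A = A"
  shows "transpose_mat (transpose_mat W * A * W) = transpose_mat W * A * W"
proof -
  have WA: "transpose_mat W * A \<in> carrier_mat m n" using A W by simp
  have "transpose_mat (transpose_mat W * A * W) = transpose_mat W * transpose_mat (transpose_mat W * A)"
    by (rule transpose_mult[OF WA W])
  also have "transpose_mat (transpose_mat W * A) = A * W"
    using transpose_mult[of "transpose_mat W" m n A n] A W sym by simp
  finally show ?thesis using A W by (simp add: assoc_mult_mat[of _ m n _ n _ m])
qed

lemma symmetric_eigenvector_deflation:
  fixes A W :: "real mat"
  assumes A: "A \<in> carrier_mat (Suc m) (Suc m)" and sym: "transpose_mat A = A"
    and W: "orthonormal_mat (Suc m) W" and ev: "A *\<^sub>v col W 0 = e \<cdot>\<^sub>v col W 0"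
  defines "A' \<equiv> transpose_mat W * A * W"
  shows "A' = four_block_mat (mat 1 1 (\<lambda>_. e)) (0\<^sub>m 1 m) (0\<^sub>m m 1)
                (mat m m (\<lambda>(i, j). A' $$ (Suc i, Suc j)))"
proof -
  note W' = orthonormal_matD[OF W]
  have A': "A' \<in> carrier_mat (Suc m) (Suc m)" unfolding A'_def using A W'(1) by simp
  have col0: "A' $$ (i, 0) = (if i = 0 then e else 0)" if i: "i < Suc m" for i
  proof -
    have "A' $$ (i, 0) = e * (col W i \<bullet> col W 0)"
      unfolding A'_def using transpose_mult_mult_index[OF A W'(1) i, of 0] ev W'(1) i by simp
    thus ?thesis using orthonormal_mat_col_inner[OF W i, of 0] by simp
  qed
  have row0: "A' $$ (0, j) = (if j = 0 then e else 0)" if j: "j < Suc m" for j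
  proof -
    have "transpose_mat A' = A'"
      unfolding A'_def by (rule symmetric_transpose_mult_mult[OF A W'(1) sym])
    hence "A' $$ (0, j) = A' $$ (j, 0)" using A' j by (metis carrier_matD index_transpose_mat(1) zero_less_Suc)
    thus ?thesis using col0[OF j] by simp
  qed
  show ?thesis
    by (rule eq_matI) (use A' col0 row0 in auto)
qed

lemma real_symmetric_orthogonal_diagonalization:
  fixes A :: "real mat"
  assumes "A \<in> carrier_mat n n" "transpose_mat A = A"
  shows "\<exists>U f. orthonormal_mat n U \<and> transpose_mat U * A * U = mat_diag n f"
  using assms
proof (induction n arbitrary: A)
  case 0
  have "orthonormal_mat 0 (1\<^sub>m 0)" unfolding orthonormal_mat_def by simp
  moreover have "transpose_mat (1\<^sub>m 0) * A * 1\<^sub>m 0 = mat_diag 0 f" for f :: "nat \<Rightarrow> real"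
    using "0.prems"(1) by (intro eq_matI) (auto simp: mat_diag_def)
  ultimately show ?case by blast
next
  case (Suc m A)
  note A = Suc.prems(1) and sym = Suc.prems(2)
  obtain e where "eigenvalue A e" using real_symmetric_has_eigenvalue[OF A sym] by auto
  then obtain v where v: "v \<in> carrier_vec (Suc m)" "v \<bullet> v = 1" and Av: "A *\<^sub>v v = e \<cdot>\<^sub>v v"
    using unit_eigenvector_exists[OF A] by blast
  obtain W where W: "orthonormal_mat (Suc m) W" and W0: "col W 0 = v"
    using unit_vec_extends_to_orthonormal_mat[OF v] by blast
  note W' = orthonormal_matD[OF W]
  define A' where "A' = transpose_mat W * A * W"
  define A3 where "A3 = mat m m (\<lambda>(i, j). A' $$ (Suc i, Suc j))"
  define E where "E = mat 1 1 (\<lambda>_. e)"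
  have A'_block: "A' = four_block_mat E (0\<^sub>m 1 m) (0\<^sub>m m 1) A3"
    using symmetric_eigenvector_deflation[OF A sym W] Av
    unfolding W0 A'_def A3_def E_def by simp
  have A3: "A3 \<in> carrier_mat m m" unfolding A3_def by simp
  have "transpose_mat A' = A'"
    unfolding A'_def by (rule symmetric_transpose_mult_mult[OF A W'(1) sym])
  hence "A' $$ (j, i) = A' $$ (i, j)" if "i < Suc m" "j < Suc m" for i j
    using that A W'(1) unfolding A'_def by (metis carrier_matD index_mult_mat(2,3) index_transpose_mat(1,2))
  hence "transpose_mat A3 = A3"
    unfolding A3_def by (intro eq_matI) auto
  then obtain U3 f3 where U3: "orthonormal_mat m U3" and U3A3: "transpose_mat U3 * A3 * U3 = mat_diag m f3"
    using Suc.IH[OF A3] by blast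
  note U3' = orthonormal_matD[OF U3]
  define F where "F = four_block_mat (1\<^sub>m 1) (0\<^sub>m 1 m) (0\<^sub>m m 1) U3"
  have F: "orthonormal_mat (Suc m) F" unfolding F_def by (rule orthonormal_mat_one_block[OF U3])
  note F' = orthonormal_matD[OF F]
  have Ft: "transpose_mat F = four_block_mat (1\<^sub>m 1) (0\<^sub>m 1 m) (0\<^sub>m m 1) (transpose_mat U3)"
    unfolding F_def using U3'(1) by (subst transpose_four_block_mat) auto
  have "transpose_mat (W * F) * A * (W * F) = transpose_mat F * A' * F"
    unfolding A'_def using W'(1) F'(1) A
    by (simp add: transpose_mult[of _ "Suc m" "Suc m"] assoc_mult_mat[of _ "Suc m" "Suc m" _ "Suc m" _ "Suc m"])
  also have "transpose_mat F * A' = four_block_mat E (0\<^sub>m 1 m) (0\<^sub>m m 1) (transpose_mat U3 * A3)"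
    unfolding Ft A'_block using U3'(1) A3
    by (simp add: E_def mult_four_block_mat[of _ 1 1 _ m _ m _ _ 1 _ m])
  also have "\<dots> * F = four_block_mat E (0\<^sub>m 1 m) (0\<^sub>m m 1) (transpose_mat U3 * A3 * U3)"
    unfolding F_def using U3'(1) A3
    by (simp add: E_def mult_four_block_mat[of _ 1 1 _ m _ m _ _ 1 _ m])
  also have "\<dots> = mat_diag (Suc m) (\<lambda>i. if i = 0 then e else f3 (i - 1))"
    unfolding U3A3 by (rule eq_matI) (auto simp: mat_diag_def E_def)
  finally show ?case using orthonormal_mat_mult[OF W F] by blast
qed

lemma order_prod_linear_factors:
  "order x (\<Prod>a\<leftarrow>xs. [:- a, 1:]) = count_list xs (x :: 'a :: idom)"
proof -
  have "order x (\<Prod>a\<leftarrow>xs. [:- a, 1:]) = sum_list (map (order x) (map (\<lambda>a. [:- a, 1:]) xs))"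
    by (subst order_prod_list) auto
  also have "\<dots> = count_list xs x" by (induct xs) (auto simp: order_linear')
  finally show ?thesis .
qed

lemma sum_list_map_eq_sum_of_nat_count:
  fixes g :: "'a \<Rightarrow> 'b :: semiring_1"
  shows "sum_list (map g xs) = (\<Sum>x\<in>set xs. of_nat (count_list xs x) * g x)"
proof (induction xs)
  case (Cons a xs)
  have "(\<Sum>x\<in>set (a # xs). of_nat (count_list (a # xs) x) * g x)
      = (\<Sum>x\<in>insert a (set xs). of_nat (count_list xs x) * g x + (if x = a then g x else 0))"
    by (intro sum.cong) (auto simp: distrib_right add.commute)
  also have "\<dots> = (\<Sum>x\<in>insert a (set xs). of_nat (count_list xs x) * g x) + g a"
    by (simp add: sum.distrib)
  also have "(\<Sum>x\<in>insert a (set xs). of_nat (count_list xs x) * g x)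
      = (\<Sum>x\<in>set xs. of_nat (count_list xs x) * g x)"
    by (cases "a \<in> set xs") (auto simp: insert_absorb)
  finally show ?case using Cons by (simp add: add.commute)
qed simp

locale orthogonal_diagonalization =
  fixes A U :: "real mat" and n :: nat and f :: "nat \<Rightarrow> real"
  assumes carrier: "A \<in> carrier_mat n n"
    and orthonormal: "orthonormal_mat n U"
    and diagonalizes: "transpose_mat U * A * U = mat_diag n f"
begin

lemma U_carrier: "U \<in> carrier_mat n n"
  using orthonormal_matD(1)[OF orthonormal] .

lemma decomposition: "A = U * mat_diag n f * transpose_mat U"
proof -
  note U = orthonormal_matD[OF orthonormal]
  have "U * mat_diag n f * transpose_mat U = (U * transpose_mat U) * A * (U * transpose_mat U)"
    unfolding diagonalizes[symmetric] using carrier U(1)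
    by (simp add: assoc_mult_mat[of _ n n _ n _ n])
  thus ?thesis using carrier U(3) by simp
qed

lemma char_poly_eq: "char_poly A = (\<Prod>a\<leftarrow>map f [0..<n]. [:- a, 1:])"
proof -
  note U = orthonormal_matD[OF orthonormal]
  have "similar_mat_wit A (mat_diag n f) U (transpose_mat U)"
    using U carrier decomposition by (intro similar_mat_witI) auto
  hence "char_poly A = char_poly (mat_diag n f)"
    by (intro char_poly_similar) (auto simp: similar_mat_def)
  also have "\<dots> = (\<Prod>a\<leftarrow>diag_mat (mat_diag n f). [:- a, 1:])"
    by (rule char_poly_upper_triangular[of _ n]) (auto simp: upper_triangular_def mat_diag_def)
  also have "diag_mat (mat_diag n f) = map f [0..<n]"
    unfolding diag_mat_def mat_diag_def by auto
  finally show ?thesis .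
qed

lemma eigenvalues_eq: "{x. eigenvalue A x} = f ` {..<n}"
proof -
  have "eigenvalue A x \<longleftrightarrow> x \<in> set (map f [0..<n])" for x
    unfolding eigenvalue_root_char_poly[OF carrier] char_poly_eq
    by (induct "map f [0..<n]") (auto simp: poly_prod_list_zero_iff)
  thus ?thesis by auto
qed

lemma eig_mult_eq: "eig_mult A x = count_list (map f [0..<n]) x"
  unfolding eig_mult_def char_poly_eq by (rule order_prod_linear_factors)

lemma renyi_tilde_eq: "renyi_tilde \<alpha> A = (\<Sum>i<n. (f i / mtrace A) powr \<alpha>)"
proof -
  have "renyi_tilde \<alpha> A = sum_list (map (\<lambda>x. (x / mtrace A) powr \<alpha>) (map f [0..<n]))"
    unfolding renyi_tilde_def eigenvalues_eq eig_mult_eq sum_list_map_eq_sum_of_nat_count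
    by (simp add: atLeast0LessThan)
  thus ?thesis by (simp add: sum_list_distinct_conv_sum_set atLeast0LessThan)
qed

lemma eigenvalue_le_lambda_max: "i < n \<Longrightarrow> f i \<le> lambda_max A"
  unfolding lambda_max_def eigenvalues_eq by simp

lemma eigenvalue_eq_quadratic_form: "i < n \<Longrightarrow> f i = col U i \<bullet> (A *\<^sub>v col U i)"
  using transpose_mult_mult_index[OF carrier U_carrier, of i i] diagonalizes
  by (simp add: mat_diag_def)

lemma quadratic_form_eq:
  assumes w: "w \<in> carrier_vec n"
  shows "w \<bullet> (A *\<^sub>v w) = (\<Sum>i<n. f i * (col U i \<bullet> w)\<^sup>2)"
proof -
  let ?q = "transpose_mat U *\<^sub>v w"
  have U: "U \<in> carrier_mat n n" "transpose_mat U \<in> carrier_mat n n" using U_carrier by auto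
  have q: "?q \<in> carrier_vec n" using U(2) w by (rule mult_mat_vec_carrier)
  have D: "mat_diag n f *\<^sub>v ?q \<in> carrier_vec n"
    using q by (rule mult_mat_vec_carrier[OF mat_diag_carrier])
  have "A *\<^sub>v w = U *\<^sub>v (mat_diag n f *\<^sub>v ?q)"
  proof -
    have "A *\<^sub>v w = (U * mat_diag n f) *\<^sub>v ?q"
      using decomposition U w assoc_mult_mat_vec[of "U * mat_diag n f" n n "transpose_mat U" n w]
      by simp
    thus ?thesis using U(1) q by (simp add: assoc_mult_mat_vec[of U n n "mat_diag n f" n])
  qed
  hence "w \<bullet> (A *\<^sub>v w) = ?q \<bullet> (mat_diag n f *\<^sub>v ?q)"
    using transpose_vec_mult_scalar[OF U(1) D w] by simp
  also have "\<dots> = (\<Sum>i<n. f i * (col U i \<bullet> w)\<^sup>2)"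
    using U(1) by (simp add: mat_diag_quadratic_form[OF q])
  finally show ?thesis .
qed

end

lemma sym_psd_orthogonal_diagonalization:
  assumes X: "sym_psd n X"
  obtains U f where "orthogonal_diagonalization X U n f" "\<And>i. i < n \<Longrightarrow> 0 \<le> f i"
proof -
  have X': "X \<in> carrier_mat n n" "transpose_mat X = X"
    and psd: "\<And>v. v \<in> carrier_vec n \<Longrightarrow> v \<bullet> (X *\<^sub>v v) \<ge> 0"
    using X unfolding sym_psd_def by auto
  obtain U f where "orthonormal_mat n U" "transpose_mat U * X * U = mat_diag n f"
    using real_symmetric_orthogonal_diagonalization[OF X'] by blast
  then interpret orthogonal_diagonalization X U n f
    using X' by unfold_locales
  have "0 \<le> f i" if "i < n" for i
    using eigenvalue_eq_quadratic_form[OF that] psd U_carrier that by simp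
  with that show ?thesis using orthogonal_diagonalization_axioms by blast
qed

section \<open>A Klein-type trace inequality\<close>

lemma bernoulli_powr:
  fixes t a :: real
  assumes t: "0 \<le> t" and a: "1 \<le> a"
  shows "1 + a * (t - 1) \<le> t powr a"
proof -
  define h where "h t = t powr a - 1 - a * (t - 1)" for t :: real
  have dh: "(h has_real_derivative a * (x powr (a - 1) - 1)) (at x)" if "0 < x" for x
    unfolding h_def using that by (auto intro!: derivative_eq_intros simp: algebra_simps)
  \<comment> \<open>\<open>h\<close> decreases on \<open>[0, 1]\<close> and increases on \<open>[1, \<infinity>)\<close>, so its minimum is \<open>h 1 = 0\<close>\<close>
  have "h 1 \<le> h t"
  proof (cases "1 \<le> t")
    case True
    show ?thesis
    proof (rule DERIV_nonneg_imp_nondecreasing[OF True])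
      fix x :: real assume "1 \<le> x"
      thus "\<exists>y. (h has_real_derivative y) (at x) \<and> 0 \<le> y"
        using dh[of x] a ge_one_powr_ge_zero[of x "a - 1"] by auto
    qed
  next
    case False
    show ?thesis
    proof (cases "t = 0")
      case True thus ?thesis using a by (simp add: h_def)
    next
      case False
      show ?thesis
      proof (rule DERIV_nonpos_imp_nonincreasing[of t 1 h])
        show "t \<le> 1" using \<open>\<not> 1 \<le> t\<close> by simp
        fix x :: real assume "t \<le> x" "x \<le> 1"
        hence "0 < x" "x \<le> 1" using t False by auto
        thus "\<exists>y. (h has_real_derivative y) (at x) \<and> y \<le> 0"
          using dh[of x] a powr_le1[of "a - 1" x] by (auto simp: mult_nonneg_nonpos)
      qed
    qed
  qed
  thus ?thesis by (simp add: h_def)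
qed

lemma powr_tangent_le:
  fixes x y a :: real
  assumes x: "0 \<le> x" and y: "0 \<le> y" and a: "1 \<le> a"
  shows "y powr a + a * y powr (a - 1) * (x - y) \<le> x powr a"
proof (cases "y = 0")
  case True thus ?thesis using x by simp
next
  case False
  hence y: "0 < y" using y by simp
  have "y powr a * (1 + a * (x / y - 1)) \<le> y powr a * (x / y) powr a"
    using bernoulli_powr[of "x / y" a] x y a by (intro mult_left_mono) auto
  also have "y powr a * (x / y) powr a = x powr a" using x y by (simp add: powr_divide)
  also have "y powr a * (1 + a * (x / y - 1)) = y powr a + a * (y powr a / y) * (x - y)"
    using y by (simp add: field_simps)
  also have "y powr a / y = y powr (a - 1)" using y by (simp add: powr_diff)
  finally show ?thesis .
qed

lemma doubly_stochastic_tangent_sum_le: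
  fixes w :: "nat \<Rightarrow> nat \<Rightarrow> real" and F F' :: "real \<Rightarrow> real"
  assumes nonneg: "\<And>i j. i < n \<Longrightarrow> j < n \<Longrightarrow> 0 \<le> w i j"
    and rows: "\<And>i. i < n \<Longrightarrow> (\<Sum>j<n. w i j) = 1"
    and cols: "\<And>j. j < n \<Longrightarrow> (\<Sum>i<n. w i j) = 1"
    and tangent: "\<And>i j. i < n \<Longrightarrow> j < n \<Longrightarrow> F' (y j) * (x i - y j) \<le> F (x i) - F (y j)"
  shows "(\<Sum>j<n. F' (y j) * ((\<Sum>i<n. w i j * x i) - y j))
         \<le> (\<Sum>i<n. F (x i)) - (\<Sum>j<n. F (y j))"
proof -
  have "F' (y j) * ((\<Sum>i<n. w i j * x i) - y j) = (\<Sum>i<n. w i j * (F' (y j) * (x i - y j)))"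
    if j: "j < n" for j
  proof -
    have "(\<Sum>i<n. w i j * (F' (y j) * (x i - y j)))
        = F' (y j) * ((\<Sum>i<n. w i j * x i) - (\<Sum>i<n. w i j) * y j)"
      by (simp add: right_diff_distrib sum_subtractf sum_distrib_left sum_distrib_right mult_ac)
    thus ?thesis using cols[OF j] by simp
  qed
  hence "(\<Sum>j<n. F' (y j) * ((\<Sum>i<n. w i j * x i) - y j))
      = (\<Sum>j<n. \<Sum>i<n. w i j * (F' (y j) * (x i - y j)))"
    by simp
  also have "\<dots> \<le> (\<Sum>j<n. \<Sum>i<n. w i j * (F (x i) - F (y j)))"
    using nonneg tangent by (intro sum_mono mult_left_mono) auto
  also have "\<dots> = (\<Sum>j<n. \<Sum>i<n. w i j * F (x i)) - (\<Sum>j<n. (\<Sum>i<n. w i j) * F (y j))"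
    by (simp add: right_diff_distrib sum_subtractf sum_distrib_right)
  also have "(\<Sum>j<n. \<Sum>i<n. w i j * F (x i)) = (\<Sum>i<n. (\<Sum>j<n. w i j) * F (x i))"
    by (subst sum.swap) (simp add: sum_distrib_right)
  finally show ?thesis using rows cols by simp
qed

lemma spectral_sum_difference_ge:
  fixes X Y :: "real mat" and F F' :: "real \<Rightarrow> real"
  assumes X: "orthogonal_diagonalization X U n lam" and Y: "orthogonal_diagonalization Y V n mu"
    and lam: "\<And>i. i < n \<Longrightarrow> 0 \<le> lam i" and mu: "\<And>j. j < n \<Longrightarrow> 0 \<le> mu j"
    and tangent: "\<And>x y. 0 \<le> x \<Longrightarrow> 0 \<le> y \<Longrightarrow> F' y * (x - y) \<le> F x - F y"
  shows "(\<Sum>j<n. F' (mu j) * (transpose_mat V * (X - Y) * V) $$ (j, j))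
         \<le> (\<Sum>i<n. F (lam i)) - (\<Sum>j<n. F (mu j))"
proof -
  interpret X: orthogonal_diagonalization X U n lam by fact
  interpret Y: orthogonal_diagonalization Y V n mu by fact
  have XY: "X - Y \<in> carrier_mat n n" using Y.carrier by (rule minus_carrier_mat)
  have "(transpose_mat V * (X - Y) * V) $$ (j, j) = (\<Sum>i<n. (col U i \<bullet> col V j)\<^sup>2 * lam i) - mu j"
    if j: "j < n" for j
  proof -
    have V_j: "col V j \<in> carrier_vec n" using Y.U_carrier j by simp
    have "(transpose_mat V * (X - Y) * V) $$ (j, j) = col V j \<bullet> ((X - Y) *\<^sub>v col V j)"
      by (rule transpose_mult_mult_index[OF XY Y.U_carrier j j])
    also have "\<dots> = col V j \<bullet> (X *\<^sub>v col V j) - col V j \<bullet> (Y *\<^sub>v col V j)"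
      using X.carrier Y.carrier V_j
      by (simp add: minus_mult_distrib_mat_vec scalar_prod_minus_distrib[of _ n])
    finally show ?thesis
      using X.quadratic_form_eq[OF V_j] Y.eigenvalue_eq_quadratic_form[OF j]
      by (simp add: mult.commute)
  qed
  moreover have "(\<Sum>j<n. F' (mu j) * ((\<Sum>i<n. (col U i \<bullet> col V j)\<^sup>2 * lam i) - mu j))
      \<le> (\<Sum>i<n. F (lam i)) - (\<Sum>j<n. F (mu j))"
    using orthonormal_overlap_row_sum[OF X.orthonormal Y.orthonormal]
      orthonormal_overlap_col_sum[OF X.orthonormal Y.orthonormal] lam mu tangent
    by (intro doubly_stochastic_tangent_sum_le) auto
  ultimately show ?thesis by simp
qed

section \<open>Frobenius norm\<close>

lemma frob_norm_eq_sqrt_sum_col_norms: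
  assumes "M \<in> carrier_mat r c"
  shows "frob_norm M = sqrt (\<Sum>j<c. col M j \<bullet> col M j)"
  unfolding frob_norm_def using assms
  by (subst sum.swap) (auto simp: scalar_prod_def power2_eq_square atLeast0LessThan
      intro!: arg_cong[where f = sqrt] sum.cong)

lemma frob_norm_transpose: "frob_norm (transpose_mat M) = frob_norm M"
  unfolding frob_norm_def by (subst sum.swap) (auto intro!: arg_cong[where f = sqrt] sum.cong)

lemma frob_norm_minus_commute:
  assumes "X \<in> carrier_mat r c" "Y \<in> carrier_mat r c"
  shows "frob_norm (Y - X) = frob_norm (X - Y)"
  unfolding frob_norm_def using assms
  by (auto intro!: arg_cong[where f = sqrt] sum.cong simp: power2_commute)

lemma frob_norm_orthonormal_mult_left:
  assumes V: "orthonormal_mat n V" and N: "N \<in> carrier_mat n c"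
  shows "frob_norm (transpose_mat V * N) = frob_norm N"
proof -
  have V': "V \<in> carrier_mat n n" using orthonormal_matD(1)[OF V] .
  have "col (transpose_mat V * N) j \<bullet> col (transpose_mat V * N) j = col N j \<bullet> col N j"
    if "j < c" for j
    using that V' N orthonormal_mat_transpose_isometry[OF V, of "col N j"]
    by (simp add: col_mult2 del: col_mult)
  thus ?thesis
    using V' N by (simp add: frob_norm_eq_sqrt_sum_col_norms[of _ n c])
qed

lemma frob_norm_orthonormal_conj:
  assumes V: "orthonormal_mat n V" and Z: "Z \<in> carrier_mat n n"
  shows "frob_norm (transpose_mat V * Z * V) = frob_norm Z"
proof -
  have V': "V \<in> carrier_mat n n" using orthonormal_matD(1)[OF V] .
  have "frob_norm (transpose_mat V * Z * V) = frob_norm (Z * V)"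
    using frob_norm_orthonormal_mult_left[OF V, of "Z * V" n] V' Z
    by (simp add: assoc_mult_mat[of _ n n _ n _ n])
  also have "\<dots> = frob_norm (transpose_mat V * transpose_mat Z)"
    by (metis frob_norm_transpose transpose_mult[OF Z V'])
  also have "\<dots> = frob_norm Z"
    using frob_norm_orthonormal_mult_left[OF V, of "transpose_mat Z" n] Z
    by (simp add: frob_norm_transpose)
  finally show ?thesis .
qed

lemma sum_abs_le_sqrt_card_mult_sqrt_sum_squares:
  fixes g :: "nat \<Rightarrow> real"
  shows "(\<Sum>j<n. \<bar>g j\<bar>) \<le> sqrt (real n) * sqrt (\<Sum>j<n. (g j)\<^sup>2)"
proof -
  have "0 \<le> (\<Sum>i<n. \<Sum>j<n. (\<bar>g i\<bar> - \<bar>g j\<bar>)\<^sup>2)" by (intro sum_nonneg) auto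
  also have "\<dots> = (\<Sum>i<n. \<Sum>j<n. (g i)\<^sup>2 + (g j)\<^sup>2 - 2 * \<bar>g i\<bar> * \<bar>g j\<bar>)"
    by (intro sum.cong refl) (simp add: power2_eq_square algebra_simps)
  also have "\<dots> = (\<Sum>i<n. \<Sum>j<n. (g i)\<^sup>2) + (\<Sum>i<n. \<Sum>j<n. (g j)\<^sup>2)
       - 2 * (\<Sum>i<n. \<Sum>j<n. \<bar>g i\<bar> * \<bar>g j\<bar>)"
    by (simp add: sum_subtractf sum.distrib sum_distrib_left mult.assoc)
  also have "(\<Sum>i<n. \<Sum>j<n. \<bar>g i\<bar> * \<bar>g j\<bar>) = (\<Sum>j<n. \<bar>g j\<bar>)\<^sup>2"
    by (simp add: power2_eq_square sum_product)
  also have "(\<Sum>i<n. \<Sum>j<n. (g i)\<^sup>2) = real n * (\<Sum>j<n. (g j)\<^sup>2)"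
    by (simp add: sum_distrib_left)
  finally have "(\<Sum>j<n. \<bar>g j\<bar>)\<^sup>2 \<le> real n * (\<Sum>j<n. (g j)\<^sup>2)" by simp
  hence "sqrt ((\<Sum>j<n. \<bar>g j\<bar>)\<^sup>2) \<le> sqrt (real n * (\<Sum>j<n. (g j)\<^sup>2))"
    by (rule real_sqrt_le_mono)
  thus ?thesis by (simp add: real_sqrt_mult sum_nonneg)
qed

lemma sum_abs_diag_le_frob_norm:
  fixes M :: "real mat"
  assumes M: "M \<in> carrier_mat n n"
  shows "(\<Sum>j<n. \<bar>M $$ (j, j)\<bar>) \<le> sqrt (real n) * frob_norm M"
proof -
  have "(\<Sum>j<n. (M $$ (j, j))\<^sup>2) \<le> (\<Sum>j<n. \<Sum>i<n. (M $$ (j, i))\<^sup>2)"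
    by (intro sum_mono member_le_sum) auto
  hence "sqrt (\<Sum>j<n. (M $$ (j, j))\<^sup>2) \<le> frob_norm M"
    unfolding frob_norm_def using M by simp
  thus ?thesis
    using sum_abs_le_sqrt_card_mult_sqrt_sum_squares[of "\<lambda>j. M $$ (j, j)" n]
    by (meson mult_left_mono order.trans real_sqrt_ge_zero of_nat_0_le_iff)
qed

section \<open>The block-diagonal part\<close>

lemma quadratic_form_eq_double_sum:
  assumes M: "M \<in> carrier_mat n n" and x: "x \<in> carrier_vec n"
  shows "x \<bullet> (M *\<^sub>v x) = (\<Sum>i<n. \<Sum>j<n. x $ i * M $$ (i, j) * x $ j)"
  using M x
  by (auto simp: scalar_prod_def sum_distrib_left atLeast0LessThan mult.assoc intro!: sum.cong)

lemma mtrace_blkdiag_part: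
  assumes "H \<in> carrier_mat n n"
  shows "mtrace (blkdiag_part blk H) = mtrace H"
  using assms unfolding mtrace_def blkdiag_part_def by simp

lemma sym_psd_blkdiag_part:
  assumes H: "sym_psd n H"
  shows "sym_psd n (blkdiag_part blk H)"
proof -
  let ?B = "blkdiag_part blk H"
  have Hc: "H \<in> carrier_mat n n" and Hs: "transpose_mat H = H"
    and Hp: "\<And>v. v \<in> carrier_vec n \<Longrightarrow> 0 \<le> v \<bullet> (H *\<^sub>v v)"
    using H unfolding sym_psd_def by auto
  have Bc: "?B \<in> carrier_mat n n" using Hc unfolding blkdiag_part_def by auto
  have B_ij: "?B $$ (i, j) = (if blk i = blk j then H $$ (i, j) else 0)" if "i < n" "j < n" for i j
    using Hc that unfolding blkdiag_part_def by auto
  have "H $$ (j, i) = H $$ (i, j)" if "i < n" "j < n" for i j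
    using Hs Hc that by (metis carrier_matD index_transpose_mat(1))
  hence Bs: "transpose_mat ?B = ?B"
    using Bc by (intro eq_matI) (auto simp: B_ij)
  have "0 \<le> v \<bullet> (?B *\<^sub>v v)" if v: "v \<in> carrier_vec n" for v
  proof -
    define w where "w b = vec n (\<lambda>i. if blk i = b then v $ i else 0)" for b
    have w: "w b \<in> carrier_vec n" for b unfolding w_def by simp
    have entry: "v $ i * ?B $$ (i, j) * v $ j
        = (\<Sum>b\<in>blk ` {..<n}. w b $ i * H $$ (i, j) * w b $ j)" if "i < n" "j < n" for i j
    proof -
      have "(\<Sum>b\<in>blk ` {..<n}. w b $ i * H $$ (i, j) * w b $ j)
          = (\<Sum>b\<in>blk ` {..<n}. if b = blk i then (if blk j = b then v $ i * H $$ (i, j) * v $ j else 0) else 0)"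
        using that by (intro sum.cong refl) (auto simp: w_def)
      thus ?thesis using that by (simp add: B_ij)
    qed
    have "v \<bullet> (?B *\<^sub>v v) = (\<Sum>i<n. \<Sum>j<n. \<Sum>b\<in>blk ` {..<n}. w b $ i * H $$ (i, j) * w b $ j)"
      unfolding quadratic_form_eq_double_sum[OF Bc v] by (intro sum.cong refl entry) auto
    also have "\<dots> = (\<Sum>i<n. \<Sum>b\<in>blk ` {..<n}. \<Sum>j<n. w b $ i * H $$ (i, j) * w b $ j)"
      by (rule sum.cong[OF refl], rule sum.swap)
    also have "\<dots> = (\<Sum>b\<in>blk ` {..<n}. \<Sum>i<n. \<Sum>j<n. w b $ i * H $$ (i, j) * w b $ j)"
      by (rule sum.swap)
    also have "\<dots> = (\<Sum>b\<in>blk ` {..<n}. w b \<bullet> (H *\<^sub>v w b))"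
      by (simp add: quadratic_form_eq_double_sum[OF Hc w])
    also have "\<dots> \<ge> 0" by (intro sum_nonneg Hp w)
    finally show ?thesis .
  qed
  thus ?thesis unfolding sym_psd_def using Bc Bs by auto
qed

lemma sum_mult_ge_minus_bound:
  fixes c m :: "nat \<Rightarrow> real"
  assumes "\<And>j. j < n \<Longrightarrow> 0 \<le> c j \<and> c j \<le> C"
  shows "- (C * (\<Sum>j<n. \<bar>m j\<bar>)) \<le> (\<Sum>j<n. c j * m j)"
proof -
  have "- (C * \<bar>m j\<bar>) \<le> c j * m j" if "j < n" for j
  proof -
    have "- (c j * m j) \<le> c j * \<bar>m j\<bar>"
      using assms[OF that] mult_left_mono[of "- m j" "\<bar>m j\<bar>" "c j"] by simp
    also have "\<dots> \<le> C * \<bar>m j\<bar>" using assms[OF that] by (simp add: mult_right_mono)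
    finally show ?thesis by simp
  qed
  hence "(\<Sum>j<n. - (C * \<bar>m j\<bar>)) \<le> (\<Sum>j<n. c j * m j)" by (intro sum_mono) auto
  thus ?thesis by (simp add: sum_negf sum_distrib_left)
qed

lemma renyi_tilde_diff_le:
  fixes X Y :: "real mat"
  assumes X: "sym_psd n X" and Y: "sym_psd n Y"
    and trace: "mtrace X = T" "mtrace Y = T" and T: "0 < T" and \<alpha>: "1 \<le> \<alpha>"
    and \<Lambda>: "lambda_max Y \<le> \<Lambda>"
  shows "renyi_tilde \<alpha> Y - renyi_tilde \<alpha> X
         \<le> \<alpha> * (\<Lambda> / T) powr (\<alpha> - 1) * (sqrt (real n) * frob_norm (X - Y) / T)"
proof -
  obtain U lam where UX: "orthogonal_diagonalization X U n lam"
    and lam: "\<And>i. i < n \<Longrightarrow> 0 \<le> lam i"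
    using sym_psd_orthogonal_diagonalization[OF X] by blast
  obtain V mu where VY: "orthogonal_diagonalization Y V n mu"
    and mu: "\<And>j. j < n \<Longrightarrow> 0 \<le> mu j"
    using sym_psd_orthogonal_diagonalization[OF Y] by blast
  interpret X: orthogonal_diagonalization X U n lam by fact
  interpret Y: orthogonal_diagonalization Y V n mu by fact
  define F where "F x = (x / T) powr \<alpha>" for x
  define F' where "F' x = \<alpha> * (x / T) powr (\<alpha> - 1) / T" for x
  define M where "M = transpose_mat V * (X - Y) * V"
  have XY: "X - Y \<in> carrier_mat n n" using Y.carrier by (rule minus_carrier_mat)
  have M: "M \<in> carrier_mat n n" unfolding M_def using XY Y.U_carrier by simp
  have tangent: "F' y * (x - y) \<le> F x - F y" if "0 \<le> x" "0 \<le> y" for x y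
  proof -
    have "F' y * (x - y) = \<alpha> * (y / T) powr (\<alpha> - 1) * (x / T - y / T)"
      unfolding F'_def using T by (simp add: field_simps)
    thus ?thesis
      using powr_tangent_le[of "x / T" "y / T" \<alpha>] that T \<alpha> unfolding F_def by simp
  qed
  have F'_bound: "0 \<le> F' (mu j) \<and> F' (mu j) \<le> F' \<Lambda>" if "j < n" for j
    using mu[OF that] Y.eigenvalue_le_lambda_max[OF that] \<Lambda> T \<alpha> unfolding F'_def
    by (auto intro!: divide_right_mono mult_left_mono powr_mono2)
  have "renyi_tilde \<alpha> Y - renyi_tilde \<alpha> X = - ((\<Sum>i<n. F (lam i)) - (\<Sum>j<n. F (mu j)))"
    unfolding X.renyi_tilde_eq Y.renyi_tilde_eq trace F_def by simp
  also have "\<dots> \<le> - (\<Sum>j<n. F' (mu j) * M $$ (j, j))"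
    using spectral_sum_difference_ge[OF UX VY lam mu tangent] unfolding M_def by simp
  also have "\<dots> \<le> F' \<Lambda> * (\<Sum>j<n. \<bar>M $$ (j, j)\<bar>)"
    using sum_mult_ge_minus_bound[of n "\<lambda>j. F' (mu j)" "F' \<Lambda>" "\<lambda>j. M $$ (j, j)"] F'_bound
    by simp
  also have "\<dots> \<le> F' \<Lambda> * (sqrt (real n) * frob_norm M)"
    using sum_abs_diag_le_frob_norm[OF M] T \<alpha> by (intro mult_left_mono) (auto simp: F'_def)
  also have "frob_norm M = frob_norm (X - Y)"
    unfolding M_def by (rule frob_norm_orthonormal_conj[OF Y.orthonormal XY])
  finally show ?thesis unfolding F'_def by simp
qed

theorem mainTheorem8:
  fixes d L :: nat and H :: "real mat" and blk :: "nat \<Rightarrow> nat" and \<alpha> :: real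
  assumes H: "sym_psd d H"
    and blk_range: "\<forall>i<d. blk i < L"
    and blk_mono: "\<forall>i j. i \<le> j \<longrightarrow> j < d \<longrightarrow> blk i \<le> blk j"
    and T_pos: "mtrace H > 0"
    and alpha: "\<alpha> > 1"
  shows "let B = blkdiag_part blk H; E = H - B; T = mtrace H;
             \<Lambda> = max (lambda_max H) (lambda_max B)
         in \<bar>renyi_tilde \<alpha> H - renyi_tilde \<alpha> B\<bar>
              \<le> \<alpha> * (\<Lambda> / T) powr (\<alpha> - 1) * (sqrt (real d) * frob_norm E / T)"
proof -
  define B where "B = blkdiag_part blk H"
  define T where "T = mtrace H"
  define \<Lambda> where "\<Lambda> = max (lambda_max H) (lambda_max B)"
  have Hc: "H \<in> carrier_mat d d" using H unfolding sym_psd_def by simp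
  have B: "sym_psd d B" unfolding B_def by (rule sym_psd_blkdiag_part[OF H])
  have trace: "mtrace H = T" "mtrace B = T"
    unfolding T_def B_def by (simp_all add: mtrace_blkdiag_part[OF Hc])
  have "renyi_tilde \<alpha> B - renyi_tilde \<alpha> H
      \<le> \<alpha> * (\<Lambda> / T) powr (\<alpha> - 1) * (sqrt (real d) * frob_norm (H - B) / T)"
    using renyi_tilde_diff_le[OF H B trace] T_pos alpha unfolding T_def \<Lambda>_def by simp
  moreover have "renyi_tilde \<alpha> H - renyi_tilde \<alpha> B
      \<le> \<alpha> * (\<Lambda> / T) powr (\<alpha> - 1) * (sqrt (real d) * frob_norm (H - B) / T)"
    using renyi_tilde_diff_le[OF B H trace(2,1)] T_pos alpha
      frob_norm_minus_commute[of B d d H] B Hc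
    unfolding T_def \<Lambda>_def sym_psd_def by simp
  ultimately show ?thesis
    unfolding Let_def B_def[symmetric] T_def[symmetric] \<Lambda>_def[symmetric] by linarith
qed

end
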